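(* Let $U$ be a separable real Banach space with closed unit ball $B_U$, and let $\lambda$ be a $\sigma$-finite measure on $\mathcal B(U)$ with $\lambda(\{0\})=0$. Let $N$ be a Poisson random measure on $(0,\infty)\times U$ with intensity measure $\mathrm{Leb}\otimes\lambda$. If for all $u^\ast\in U^\ast$ the image measure $\langle\lambda,u^\ast\rangle$ is a Lévy measure on $\mathbb R$, then for all $u^\ast\in U^\ast$, $$\int_{(0,1]\times B_U}|\langle u,u^\ast\rangle|^2\,N(\mathrm ds,\mathrm du)<\infty\quad\text{almost surely.}$$
   Context: $\langle\lambda,u^\ast\rangle$ denotes the image (push-forward) of $\lambda$ under $u\mapsto\langle u,u^\ast\rangle$. A $\sigma$-finite measure $\lambda$ on the Borel sets of a separable Banach space $W$ with $\lambda(\{0\})=0$ is a Lévy measure if $w^\ast\mapsto\exp\big(\int_W(e^{i\langle w,w^\ast\rangle}-1-i\langle w,w^\ast\rangle\mathbf 1_{\{\|w\|\le1\}})\,\lambda(\mathrm dw)\big)$ is the characteristic function of a Borel probability measure on $W$ (here applied with $W=\mathbb R$). A Poisson random measure on $(0,\infty)\times U$ with intensity $\nu=\mathrm{Leb}\otimes\lambda$ is a random measure $N$ with values in $\{0,1,\dots\}\cup\{\infty\}$ such that $N(A)$ is Poisson with parameter $\nu(A)$ and $N(A_1),\dots,N(A_n)$ are independent for disjoint $A_i$. *)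

theory Defs
  imports "HOL-Probability.Probability"
begin

text \<open>Levy measure on the real line (W = R, the dual pairing being (x,t) maps to t*x):
  a sigma-finite Borel measure with no mass at 0 such that
  t maps to exp(integral of (e^{itx} - 1 - itx 1_{|x| <= 1})) is the characteristic
  function of a Borel probability measure.\<close>
definition levy_measure_real :: "real measure \<Rightarrow> bool" where
  "levy_measure_real m \<longleftrightarrow>
     sets m = sets borel \<and> sigma_finite_measure m \<and> emeasure m {0} = 0 \<and>
     (\<exists>\<mu>. prob_space \<mu> \<and> sets \<mu> = sets borel \<and>
        (\<forall>t::real.
           integrable m (\<lambda>x. iexp (t * x) - 1 - \<i> * complex_of_real (t * x) * indicator {-1..1} x) \<and>
           char \<mu> t = exp (CLINT x|m. iexp (t * x) - 1 - \<i> * complex_of_real (t * x) * indicator {-1..1} x)))"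

definition image_measure_nz :: "'u measure \<Rightarrow> ('u \<Rightarrow> real) \<Rightarrow> real measure" where
  "image_measure_nz lam f = density (distr lam borel f) (indicator (- {0}))"

text \<open>Poisson random measure on the probability space P, with values in measures on the
  measurable space of nu, with intensity nu.  Poisson with parameter infinity means
  almost surely infinite.\<close>
definition poisson_random_measure :: "'w measure \<Rightarrow> ('w \<Rightarrow> 'a measure) \<Rightarrow> 'a measure \<Rightarrow> bool" where
  "poisson_random_measure P N \<nu> \<longleftrightarrow>
     (\<forall>\<omega>\<in>space P. sets (N \<omega>) = sets \<nu>) \<and>
     (\<forall>A\<in>sets \<nu>. (\<lambda>\<omega>. emeasure (N \<omega>) A) \<in> borel_measurable P) \<and>
     (\<forall>\<omega>\<in>space P. \<forall>A\<in>sets \<nu>. emeasure (N \<omega>) A \<in> range of_nat \<union> {\<infinity>}) \<and>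
     (\<forall>A\<in>sets \<nu>.
        (emeasure \<nu> A < \<infinity> \<longrightarrow>
           (AE \<omega> in P. emeasure (N \<omega>) A < \<infinity>) \<and>
           (\<forall>k::nat. measure P {\<omega>\<in>space P. emeasure (N \<omega>) A = of_nat k} =
               exp (- enn2real (emeasure \<nu> A)) * enn2real (emeasure \<nu> A) ^ k / fact k)) \<and>
        (emeasure \<nu> A = \<infinity> \<longrightarrow> (AE \<omega> in P. emeasure (N \<omega>) A = \<infinity>))) \<and>
     (\<forall>(I::nat set) A. finite I \<longrightarrow> disjoint_family_on A I \<longrightarrow> A ` I \<subseteq> sets \<nu> \<longrightarrow>
        prob_space.indep_vars P (\<lambda>_. borel) (\<lambda>i \<omega>. emeasure (N \<omega>) (A i)) I)"

end

theory Submission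
  imports Defs
begin

text \<open>By Campbell's formula, the mean of \<open>\<integral> g dN\<close> equals \<open>\<integral> g d(Leb \<otimes> \<lambda>)\<close> for every
  nonnegative measurable \<open>g\<close>, so it suffices that \<open>\<integral>\<^bsub>B\<^sub>U\<^esub> \<langle>u,u\<^sup>*\<rangle>\<^sup>2 \<lambda>(du)\<close> is finite.
  If \<open>|\<langle>u,u\<^sup>*\<rangle>| \<le> K\<close> on \<open>B\<^sub>U\<close>, then \<open>x\<^sup>2 \<le> 4K\<^sup>2(1 - cos (x/K))\<close> for \<open>|x| \<le> K\<close>, and
  \<open>\<integral> (1 - cos (x/K)) \<langle>\<lambda>,u\<^sup>*\<rangle>(dx)\<close> is finite because it is minus the real part of the
  Levy exponent of \<open>\<langle>\<lambda>,u\<^sup>*\<rangle>\<close> at \<open>1/K\<close>, whose integrand is integrable.\<close>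

lemma campbell_nn_integral:
  fixes N :: "'w \<Rightarrow> 'a measure"
  assumes sets_N: "\<And>\<omega>. \<omega> \<in> space P \<Longrightarrow> sets (N \<omega>) = sets \<nu>"
    and N_measurable: "\<And>A. A \<in> sets \<nu> \<Longrightarrow> (\<lambda>\<omega>. emeasure (N \<omega>) A) \<in> borel_measurable P"
    and mean: "\<And>A. A \<in> sets \<nu> \<Longrightarrow> (\<integral>\<^sup>+\<omega>. emeasure (N \<omega>) A \<partial>P) = emeasure \<nu> A"
    and g: "g \<in> borel_measurable \<nu>"
  shows "(\<lambda>\<omega>. \<integral>\<^sup>+x. g x \<partial>N \<omega>) \<in> borel_measurable P \<and>
         (\<integral>\<^sup>+\<omega>. (\<integral>\<^sup>+x. g x \<partial>N \<omega>) \<partial>P) = (\<integral>\<^sup>+x. g x \<partial>\<nu>)"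
  using g
proof (induction rule: borel_measurable_induct)
  case (cong f g)
  have eq: "(\<integral>\<^sup>+x. f x \<partial>N \<omega>) = (\<integral>\<^sup>+x. g x \<partial>N \<omega>)" if "\<omega> \<in> space P" for \<omega>
    using cong.hyps(3) sets_eq_imp_space_eq[OF sets_N[OF that]] by (intro nn_integral_cong) simp
  have meas: "(\<lambda>\<omega>. \<integral>\<^sup>+x. f x \<partial>N \<omega>) \<in> borel_measurable P"
    using conjunct1[OF cong.IH] by (rule measurable_cong[THEN iffD2, rotated]) (erule eq)
  have "(\<integral>\<^sup>+\<omega>. (\<integral>\<^sup>+x. f x \<partial>N \<omega>) \<partial>P) = (\<integral>\<^sup>+\<omega>. (\<integral>\<^sup>+x. g x \<partial>N \<omega>) \<partial>P)"
    using eq by (rule nn_integral_cong)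
  also have "\<dots> = (\<integral>\<^sup>+x. g x \<partial>\<nu>)"
    by (rule conjunct2[OF cong.IH])
  also have "\<dots> = (\<integral>\<^sup>+x. f x \<partial>\<nu>)"
    using cong.hyps(3) by (intro nn_integral_cong) simp
  finally show ?case
    using meas by blast
next
  case (set A)
  have eq: "(\<integral>\<^sup>+x. indicator A x \<partial>N \<omega>) = emeasure (N \<omega>) A" if "\<omega> \<in> space P" for \<omega>
    by (rule nn_integral_indicator) (simp add: sets_N[OF that] set)
  have meas: "(\<lambda>\<omega>. \<integral>\<^sup>+x. indicator A x \<partial>N \<omega>) \<in> borel_measurable P"
    using N_measurable[OF set] by (rule measurable_cong[THEN iffD2, rotated]) (erule eq)
  have "(\<integral>\<^sup>+\<omega>. (\<integral>\<^sup>+x. indicator A x \<partial>N \<omega>) \<partial>P) = (\<integral>\<^sup>+\<omega>. emeasure (N \<omega>) A \<partial>P)"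
    using eq by (rule nn_integral_cong)
  also have "\<dots> = (\<integral>\<^sup>+x. indicator A x \<partial>\<nu>)"
    using set by (simp add: mean)
  finally show ?case
    using meas by blast
next
  case (mult u c)
  have eq: "(\<integral>\<^sup>+x. c * u x \<partial>N \<omega>) = c * (\<integral>\<^sup>+x. u x \<partial>N \<omega>)" if "\<omega> \<in> space P" for \<omega>
    by (rule nn_integral_cmult) (simp add: measurable_cong_sets[OF sets_N[OF that] refl] mult.hyps(2))
  have "(\<lambda>\<omega>. c * (\<integral>\<^sup>+x. u x \<partial>N \<omega>)) \<in> borel_measurable P"
    using conjunct1[OF mult.IH] by (intro borel_measurable_times_ennreal measurable_const) simp_all
  then have meas: "(\<lambda>\<omega>. \<integral>\<^sup>+x. c * u x \<partial>N \<omega>) \<in> borel_measurable P"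
    by (rule measurable_cong[THEN iffD2, rotated]) (erule eq)
  have "(\<integral>\<^sup>+\<omega>. (\<integral>\<^sup>+x. c * u x \<partial>N \<omega>) \<partial>P) = (\<integral>\<^sup>+\<omega>. c * (\<integral>\<^sup>+x. u x \<partial>N \<omega>) \<partial>P)"
    using eq by (rule nn_integral_cong)
  also have "\<dots> = c * (\<integral>\<^sup>+x. u x \<partial>\<nu>)"
    using mult.IH by (simp add: nn_integral_cmult)
  also have "\<dots> = (\<integral>\<^sup>+x. c * u x \<partial>\<nu>)"
    using mult.hyps(2) by (simp add: nn_integral_cmult)
  finally show ?case
    using meas by blast
next
  case (add u v)
  have eq: "(\<integral>\<^sup>+x. v x + u x \<partial>N \<omega>) = (\<integral>\<^sup>+x. v x \<partial>N \<omega>) + (\<integral>\<^sup>+x. u x \<partial>N \<omega>)"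
    if "\<omega> \<in> space P" for \<omega>
    by (rule nn_integral_add) (simp_all add: measurable_cong_sets[OF sets_N[OF that] refl] add.hyps(1,3))
  have "(\<lambda>\<omega>. (\<integral>\<^sup>+x. v x \<partial>N \<omega>) + (\<integral>\<^sup>+x. u x \<partial>N \<omega>)) \<in> borel_measurable P"
    by (intro borel_measurable_add conjunct1[OF add.IH(1)] conjunct1[OF add.IH(2)])
  then have meas: "(\<lambda>\<omega>. \<integral>\<^sup>+x. v x + u x \<partial>N \<omega>) \<in> borel_measurable P"
    by (rule measurable_cong[THEN iffD2, rotated]) (erule eq)
  have "(\<integral>\<^sup>+\<omega>. (\<integral>\<^sup>+x. v x + u x \<partial>N \<omega>) \<partial>P) = (\<integral>\<^sup>+\<omega>. (\<integral>\<^sup>+x. v x \<partial>N \<omega>) + (\<integral>\<^sup>+x. u x \<partial>N \<omega>) \<partial>P)"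
    using eq by (rule nn_integral_cong)
  also have "\<dots> = (\<integral>\<^sup>+x. v x \<partial>\<nu>) + (\<integral>\<^sup>+x. u x \<partial>\<nu>)"
    using add.IH by (simp add: nn_integral_add)
  also have "\<dots> = (\<integral>\<^sup>+x. v x + u x \<partial>\<nu>)"
    using add.hyps(1,3) by (simp add: nn_integral_add)
  finally show ?case
    using meas by blast
next
  case (seq U)
  have eq: "(\<integral>\<^sup>+x. (SUP i. U i) x \<partial>N \<omega>) = (SUP i. \<integral>\<^sup>+x. U i x \<partial>N \<omega>)" if "\<omega> \<in> space P" for \<omega>
    unfolding SUP_apply
    by (rule nn_integral_monotone_convergence_SUP) (simp_all add: measurable_cong_sets[OF sets_N[OF that] refl] seq.hyps(1,3))
  have inc: "incseq (\<lambda>i \<omega>. \<integral>\<^sup>+x. U i x \<partial>N \<omega>)"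
    using seq.hyps(3) by (intro monoI le_funI nn_integral_mono) (simp add: incseq_def le_fun_def)
  have "(\<lambda>\<omega>. SUP i. \<integral>\<^sup>+x. U i x \<partial>N \<omega>) \<in> borel_measurable P"
    using conjunct1[OF seq.IH] by (intro borel_measurable_SUP) simp_all
  then have meas: "(\<lambda>\<omega>. \<integral>\<^sup>+x. (SUP i. U i) x \<partial>N \<omega>) \<in> borel_measurable P"
    by (rule measurable_cong[THEN iffD2, rotated]) (erule eq)
  have "(\<integral>\<^sup>+\<omega>. (\<integral>\<^sup>+x. (SUP i. U i) x \<partial>N \<omega>) \<partial>P) = (\<integral>\<^sup>+\<omega>. (SUP i. \<integral>\<^sup>+x. U i x \<partial>N \<omega>) \<partial>P)"
    using eq by (rule nn_integral_cong)
  also have "\<dots> = (SUP i. \<integral>\<^sup>+x. U i x \<partial>\<nu>)"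
    using seq.IH by (simp add: nn_integral_monotone_convergence_SUP[OF inc])
  also have "\<dots> = (\<integral>\<^sup>+x. (SUP i. U i) x \<partial>\<nu>)"
    unfolding SUP_apply using seq.hyps(1,3) by (simp add: nn_integral_monotone_convergence_SUP)
  finally show ?case
    using meas by blast
qed

lemma poisson_mean_sums:
  fixes a :: real
  shows "(\<lambda>k. real k * (exp (-a) * a^k / fact k)) sums a"
proof -
  have shift: "(\<lambda>k. real (Suc k) * (exp (-a) * a^(Suc k) / fact (Suc k)))
      = (\<lambda>k. exp (-a) * a * (a^k / fact k))"
    by (rule ext) (simp add: field_simps del: of_nat_Suc)
  have "(\<lambda>k. a^k / fact k) sums exp a"
    using exp_converges[of a] by (simp add: divide_inverse mult.commute)
  then have "(\<lambda>k. exp (-a) * a * (a^k / fact k)) sums (exp (-a) * a * exp a)"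
    by (rule sums_mult)
  then have "(\<lambda>k. real (Suc k) * (exp (-a) * a^(Suc k) / fact (Suc k))) sums a"
    unfolding shift by (simp add: exp_minus field_simps)
  then show ?thesis
    by (subst (asm) sums_Suc_iff) simp
qed

lemma nn_integral_poisson_distributed:
  fixes X :: "'w \<Rightarrow> ennreal"
  assumes "prob_space P" and X: "X \<in> borel_measurable P"
    and finite: "AE \<omega> in P. X \<omega> < \<infinity>"
    and range: "\<forall>\<omega>\<in>space P. X \<omega> \<in> range of_nat \<union> {\<infinity>}"
    and poisson: "\<forall>k::nat. measure P {\<omega>\<in>space P. X \<omega> = of_nat k} = exp (-a) * a^k / fact k"
    and "0 \<le> a"
  shows "(\<integral>\<^sup>+\<omega>. X \<omega> \<partial>P) = ennreal a"
proof -
  interpret prob_space P by fact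
  define S where "S k = {\<omega>\<in>space P. X \<omega> = of_nat k}" for k :: nat
  have S_sets: "S k \<in> sets P" for k
    unfolding S_def using X by measurable
  have "AE \<omega> in P. X \<omega> = (\<Sum>k. of_nat k * indicator (S k) \<omega>)"
    using finite AE_space
  proof eventually_elim
    case (elim \<omega>)
    then obtain j where j: "X \<omega> = of_nat j"
      using range by auto
    have "(\<Sum>k. (of_nat k :: ennreal) * indicator (S k) \<omega>) = (\<Sum>k\<in>{j}. of_nat k * indicator (S k) \<omega>)"
      by (rule suminf_finite) (auto simp: S_def j indicator_def)
    then show ?case
      using elim j by (simp add: S_def)
  qed
  then have "(\<integral>\<^sup>+\<omega>. X \<omega> \<partial>P) = (\<integral>\<^sup>+\<omega>. (\<Sum>k. of_nat k * indicator (S k) \<omega>) \<partial>P)"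
    by (rule nn_integral_cong_AE)
  also have "\<dots> = (\<Sum>k. of_nat k * emeasure P (S k))"
    using S_sets by (simp add: nn_integral_suminf nn_integral_cmult_indicator)
  also have "\<dots> = (\<Sum>k. ennreal (real k) * ennreal (exp (-a) * a^k / fact k))"
    using poisson by (simp add: emeasure_eq_measure S_def ennreal_of_nat_eq_real_of_nat)
  also have "\<dots> = (\<Sum>k. ennreal (real k * (exp (-a) * a^k / fact k)))"
    by (simp only: ennreal_mult'[symmetric] of_nat_0_le_iff)
  also have "\<dots> = ennreal a"
    using poisson_mean_sums[of a] \<open>0 \<le> a\<close> by (simp add: suminf_ennreal2 sums_iff)
  finally show ?thesis .
qed

lemma poisson_random_measure_mean:
  assumes "prob_space P" and N: "poisson_random_measure P N \<nu>" and A: "A \<in> sets \<nu>"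
  shows "(\<integral>\<^sup>+\<omega>. emeasure (N \<omega>) A \<partial>P) = emeasure \<nu> A"
proof (cases "emeasure \<nu> A = \<infinity>")
  case True
  with N A have "AE \<omega> in P. emeasure (N \<omega>) A = \<infinity>"
    unfolding poisson_random_measure_def by blast
  then have "(\<integral>\<^sup>+\<omega>. emeasure (N \<omega>) A \<partial>P) = (\<integral>\<^sup>+\<omega>. \<infinity> \<partial>P)"
    by (rule nn_integral_cong_AE)
  then show ?thesis
    using True prob_space.emeasure_space_1[OF \<open>prob_space P\<close>] by simp
next
  case False
  then have "emeasure \<nu> A < \<infinity>"
    by (simp add: top.not_eq_extremum)
  with N A have "(\<integral>\<^sup>+\<omega>. emeasure (N \<omega>) A \<partial>P) = ennreal (enn2real (emeasure \<nu> A))"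
    unfolding poisson_random_measure_def
    by (intro nn_integral_poisson_distributed[OF \<open>prob_space P\<close>]) auto
  then show ?thesis
    using False by (simp add: ennreal_enn2real_if)
qed

lemma poisson_random_measure_AE_nn_integral_finite:
  assumes "prob_space P" and N: "poisson_random_measure P N \<nu>"
    and g: "g \<in> borel_measurable \<nu>" and finite: "(\<integral>\<^sup>+x. g x \<partial>\<nu>) < \<infinity>"
  shows "AE \<omega> in P. (\<integral>\<^sup>+x. g x \<partial>N \<omega>) < \<infinity>"
proof -
  have "(\<lambda>\<omega>. \<integral>\<^sup>+x. g x \<partial>N \<omega>) \<in> borel_measurable P \<and>
        (\<integral>\<^sup>+\<omega>. (\<integral>\<^sup>+x. g x \<partial>N \<omega>) \<partial>P) = (\<integral>\<^sup>+x. g x \<partial>\<nu>)"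
    using N unfolding poisson_random_measure_def
    by (intro campbell_nn_integral poisson_random_measure_mean[OF \<open>prob_space P\<close> N] g) blast+
  with finite have "AE \<omega> in P. (\<integral>\<^sup>+x. g x \<partial>N \<omega>) \<noteq> \<infinity>"
    by (intro nn_integral_PInf_AE) auto
  then show ?thesis
    by (simp add: top.not_eq_extremum)
qed

lemma square_le_four_mult_one_minus_cos:
  fixes x :: real
  assumes "\<bar>x\<bar> \<le> 1"
  shows "x\<^sup>2 \<le> 4 * (1 - cos x)"
proof -
  define r where "r = iexp x - (\<Sum>k\<le>3. (\<i> * x)^k / fact k)"
  have "cmod r \<le> \<bar>x\<bar>^4 / 24"
    using iexp_approx1[of x 3] by (simp add: r_def fact_numeral)
  moreover have "Re r = cos x - 1 + x\<^sup>2 / 2"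
    by (simp add: r_def numeral_3_eq_3 Re_exp power2_eq_square Re_divide)
  moreover have "\<bar>x\<bar>^4 \<le> x\<^sup>2"
  proof -
    have "\<bar>x\<bar>^4 = x\<^sup>2 * x\<^sup>2"
      by (simp add: power2_eq_square power4_eq_xxxx)
    also have "\<dots> \<le> x\<^sup>2"
      using assms by (intro mult_left_le) (auto simp: abs_square_le_1)
    finally show ?thesis .
  qed
  moreover have "Re r \<le> cmod r"
    using abs_Re_le_cmod[of r] by linarith
  ultimately have "cos x - 1 + x\<^sup>2 / 2 \<le> x\<^sup>2 / 24"
    by linarith
  then show ?thesis
    using zero_le_power2[of x] by argo
qed

lemma levy_measure_real_nn_integral_one_minus_cos_finite:
  assumes "levy_measure_real m"
  shows "(\<integral>\<^sup>+x. ennreal (1 - cos (t * x)) \<partial>m) < \<infinity>"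
proof -
  have "integrable m (\<lambda>x. iexp (t * x) - 1 - \<i> * complex_of_real (t * x) * indicator {-1..1} x)"
    using assms unfolding levy_measure_real_def by blast
  then have "integrable m (\<lambda>x. Re (iexp (t * x) - 1 - \<i> * complex_of_real (t * x) * indicator {-1..1} x))"
    by (rule integrable_Re)
  moreover have Im_indicator: "Im (indicator {-1..1} x :: complex) = 0" for x :: real
    by (simp add: indicator_def)
  ultimately have "integrable m (\<lambda>x. cos (t * x) - 1)"
    by (simp add: Re_exp Im_indicator)
  then show ?thesis
    by (simp add: integrable_iff_bounded)
qed

lemma nn_integral_image_measure_nz:
  assumes f: "f \<in> borel_measurable M" and g: "g \<in> borel_measurable borel" and "g 0 = 0"
  shows "(\<integral>\<^sup>+x. g x \<partial>image_measure_nz M f) = (\<integral>\<^sup>+u. g (f u) \<partial>M)"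
proof -
  have "(\<integral>\<^sup>+x. g x \<partial>image_measure_nz M f) = (\<integral>\<^sup>+x. indicator (- {0}) x * g x \<partial>distr M borel f)"
    unfolding image_measure_nz_def using g by (intro nn_integral_density) simp_all
  also have "\<dots> = (\<integral>\<^sup>+x. g x \<partial>distr M borel f)"
    using \<open>g 0 = 0\<close> by (intro nn_integral_cong) (simp add: indicator_def)
  also have "\<dots> = (\<integral>\<^sup>+u. g (f u) \<partial>M)"
    using f g by (intro nn_integral_distr) simp_all
  finally show ?thesis .
qed

lemma borel_measurable_bounded_linear:
  assumes "bounded_linear f" and "sets M = sets borel"
  shows "f \<in> borel_measurable M"
  using borel_measurable_continuous_onI[OF linear_continuous_on[OF assms(1)]]
  by (simp add: measurable_cong_sets[OF assms(2) refl])

lemma nn_integral_cball_square_finite_if_levy_image: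
  fixes f :: "'u::real_normed_vector \<Rightarrow> real"
  assumes "sets M = sets borel" and f: "bounded_linear f"
    and levy: "levy_measure_real (image_measure_nz M f)"
  shows "(\<integral>\<^sup>+u. indicator (cball 0 1) u * ennreal ((f u)\<^sup>2) \<partial>M) < \<infinity>"
proof -
  obtain K where "0 < K" and f_le: "\<And>u. norm (f u) \<le> norm u * K"
    using bounded_linear.pos_bounded[OF f] by blast
  have square_le: "indicator (cball 0 1) u * ennreal ((f u)\<^sup>2)
      \<le> ennreal (4 * K\<^sup>2) * ennreal (1 - cos (inverse K * f u))" for u
  proof (cases "norm u \<le> 1")
    case True
    have "norm u * K \<le> K"
      using True \<open>0 < K\<close> by (intro mult_left_le_one_le) auto
    with f_le[of u] have "\<bar>f u\<bar> \<le> K"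
      by simp
    then have "\<bar>inverse K * f u\<bar> \<le> 1"
      using \<open>0 < K\<close> by (simp add: abs_mult field_simps)
    then have "(inverse K * f u)\<^sup>2 \<le> 4 * (1 - cos (inverse K * f u))"
      by (rule square_le_four_mult_one_minus_cos)
    then have "(f u)\<^sup>2 \<le> 4 * K\<^sup>2 * (1 - cos (inverse K * f u))"
      using \<open>0 < K\<close> by (simp add: field_simps)
    then show ?thesis
      using True by (simp add: ennreal_mult[symmetric])
  qed simp
  have [measurable]: "f \<in> borel_measurable M"
    using f assms(1) by (rule borel_measurable_bounded_linear)
  have "(\<integral>\<^sup>+u. indicator (cball 0 1) u * ennreal ((f u)\<^sup>2) \<partial>M)
      \<le> (\<integral>\<^sup>+u. ennreal (4 * K\<^sup>2) * ennreal (1 - cos (inverse K * f u)) \<partial>M)"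
    by (intro nn_integral_mono square_le)
  also have "\<dots> = ennreal (4 * K\<^sup>2) * (\<integral>\<^sup>+x. ennreal (1 - cos (inverse K * x)) \<partial>image_measure_nz M f)"
    by (simp add: nn_integral_cmult nn_integral_image_measure_nz)
  also have "\<dots> < \<infinity>"
    using levy_measure_real_nn_integral_one_minus_cos_finite[OF levy]
    by (simp add: ennreal_mult_less_top)
  finally show ?thesis .
qed

lemma (in sigma_finite_measure) nn_integral_indicator_fst_times:
  assumes [measurable]: "A \<in> sets M1" "g \<in> borel_measurable M"
  shows "(\<integral>\<^sup>+x. indicator A (fst x) * g (snd x) \<partial>(M1 \<Otimes>\<^sub>M M)) = emeasure M1 A * (\<integral>\<^sup>+y. g y \<partial>M)"
proof -
  have "(\<lambda>x. indicator A (fst x) * g (snd x)) \<in> borel_measurable (M1 \<Otimes>\<^sub>M M)"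
    by measurable
  from nn_integral_fst[OF this]
  have "(\<integral>\<^sup>+x. indicator A (fst x) * g (snd x) \<partial>(M1 \<Otimes>\<^sub>M M))
      = (\<integral>\<^sup>+s. (\<integral>\<^sup>+y. indicator A s * g y \<partial>M) \<partial>M1)"
    by simp
  also have "\<dots> = (\<integral>\<^sup>+s. indicator A s * (\<integral>\<^sup>+y. g y \<partial>M) \<partial>M1)"
    by (simp add: nn_integral_cmult)
  also have "\<dots> = emeasure M1 A * (\<integral>\<^sup>+y. g y \<partial>M)"
    by (simp add: nn_integral_multc)
  finally show ?thesis .
qed

theorem lemma4p2:
  fixes P :: "'w measure"
    and lam :: "'u::{banach, second_countable_topology} measure"
    and N :: "'w \<Rightarrow> (real \<times> 'u) measure"
  assumes "prob_space P"
    and "sets lam = sets borel"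
    and "sigma_finite_measure lam"
    and "emeasure lam {0} = 0"
    and "poisson_random_measure P N (restrict_space lborel {0<..} \<Otimes>\<^sub>M lam)"
    and "\<forall>f::'u \<Rightarrow> real. bounded_linear f \<longrightarrow> levy_measure_real (image_measure_nz lam f)"
  shows "\<forall>f::'u \<Rightarrow> real. bounded_linear f \<longrightarrow>
           (AE \<omega> in P. (\<integral>\<^sup>+ x. indicator ({0<..1} \<times> cball 0 1) x * ennreal ((f (snd x))\<^sup>2) \<partial>N \<omega>) < \<infinity>)"
proof (intro allI impI)
  fix f :: "'u \<Rightarrow> real"
  assume f: "bounded_linear f"
  have [measurable]: "f \<in> borel_measurable lam" "cball 0 1 \<in> sets lam"
    using borel_measurable_bounded_linear[OF f assms(2)] assms(2) by simp_all
  have Ioc_sets[measurable]: "{0<..1::real} \<in> sets (restrict_space lborel {0<..})"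
    by (subst sets_restrict_space_iff) auto
  have "(\<integral>\<^sup>+x. indicator ({0<..1::real} \<times> cball 0 1) x * ennreal ((f (snd x))\<^sup>2)
          \<partial>(restrict_space lborel {0<..} \<Otimes>\<^sub>M lam))
      = emeasure (restrict_space lborel {0<..}) {0<..1::real} *
        (\<integral>\<^sup>+u. indicator (cball 0 1) u * ennreal ((f u)\<^sup>2) \<partial>lam)"
    using sigma_finite_measure.nn_integral_indicator_fst_times[OF assms(3) Ioc_sets,
        of "\<lambda>u. indicator (cball 0 1) u * ennreal ((f u)\<^sup>2)"]
    by (simp add: indicator_times mult.assoc)
  also have "\<dots> = (\<integral>\<^sup>+u. indicator (cball 0 1) u * ennreal ((f u)\<^sup>2) \<partial>lam)"
    by (subst emeasure_restrict_space) auto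
  also have "\<dots> < \<infinity>"
    using assms(2,6) f by (intro nn_integral_cball_square_finite_if_levy_image) auto
  finally show "AE \<omega> in P. (\<integral>\<^sup>+ x. indicator ({0<..1} \<times> cball 0 1) x * ennreal ((f (snd x))\<^sup>2) \<partial>N \<omega>) < \<infinity>"
    by (intro poisson_random_measure_AE_nn_integral_finite[OF assms(1,5)]) measurable
qed

end
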